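(* For $\psi\in\mathbb{R}$ let $R^{xw}_\psi:\mathbb{R}^4\to\mathbb{R}^4$ be the linear map with matrix $\begin{pmatrix}\cos\psi&0&0&-\sin\psi\\0&1&0&0\\0&0&1&0\\ \sin\psi&0&0&\cos\psi\end{pmatrix}$, and let $Q(\psi)=\pi\big(R^{xw}_\psi(\mathcal{C})\setminus\{(0,0,0,1)\}\big)\subset\mathbb{R}^3$, where $\mathcal{C}=\{(x,y,z,w): x^2+y^2=\tfrac12=z^2+w^2\}$. Then: (i) $Q(0)$ has generalized reflectional symmetry along the $z$-axis. (ii) If $0<|\psi|<\pi/2$, then $Q(\psi)$ has generalized reflectional symmetry along the vertical line $\{(\tan\psi,0,t):t\in\mathbb{R}\}$; and if $0<|\psi|\le\pi/2$, then $Q(\psi)$ has generalized reflectional symmetry along the horizontal line $\{(-\cot\psi,t,0):t\in\mathbb{R}\}$. (iii) Let $R$ be the rotation of $\mathbb{R}^3$ about the $x$-axis by the angle $\pi/2$. Then (a) $Q(\psi+\pi/2)=R(Q(\psi))$ and (b) $Q(\psi+\pi)=Q(\psi)$ for all $\psi$. In particular, $Q(\psi)$ has generalized reflectional symmetry along some line for every $\psi\in\mathbb{R}$.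
   Context: Stereographic projection $\pi:\mathbb{S}^3\setminus\{(0,0,0,1)\}\to\mathbb{R}^3$ is $\pi(x,y,z,w)=\frac{1}{1-w}(x,y,z)$, where $\mathbb{S}^3$ is the unit sphere of $\mathbb{R}^4$. For $\mathbf{a}\in\mathbb{R}^3$ and $\rho>0$ let $\psi_{\mathbf{a},\rho}:\mathbb{R}^3\setminus\{\mathbf{a}\}\to\mathbb{R}^3\setminus\{\mathbf{a}\}$, $\psi_{\mathbf{a},\rho}(\mathbf{p})=\rho^2\frac{\mathbf{p}-\mathbf{a}}{|\mathbf{p}-\mathbf{a}|^2}+\mathbf{a}$ (reflection about the sphere of center $\mathbf{a}$, radius $\rho$). A set $Q\subset\mathbb{R}^3$ has generalized reflectional symmetry along a line $l$ if there exist $\mathbf{m}_0\in l$ and $\rho_0>0$ such that for every $\mathbf{a}\in l$, with $\rho=\sqrt{|\mathbf{a}-\mathbf{m}_0|^2+\rho_0^2}$, one has $\psi_{\mathbf{a},\rho}(Q\setminus\{\mathbf{a}\})=Q\setminus\{\mathbf{a}\}$. *)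

theory Defs
  imports "HOL-Analysis.Analysis"
begin

type_synonym R3 = "real \<times> real \<times> real"
type_synonym R4 = "real \<times> real \<times> real \<times> real"

definition stereo :: "R4 \<Rightarrow> R3" where
  "stereo = (\<lambda>(x,y,z,w). (x / (1 - w), y / (1 - w), z / (1 - w)))"

definition sphere_inv :: "R3 \<Rightarrow> real \<Rightarrow> R3 \<Rightarrow> R3" where
  "sphere_inv a \<rho> p = (\<rho>^2 / (norm (p - a))^2) *\<^sub>R (p - a) + a"

definition gen_refl_sym :: "R3 set \<Rightarrow> R3 set \<Rightarrow> bool" where
  "gen_refl_sym Q l \<longleftrightarrow>
     (\<exists>m0\<in>l. \<exists>\<rho>0>0. \<forall>a\<in>l.
        sphere_inv a (sqrt ((norm (a - m0))^2 + \<rho>0^2)) ` (Q - {a}) = Q - {a})"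

definition clifford :: "R4 set" where
  "clifford = {(x,y,z,w). x^2 + y^2 = 1/2 \<and> z^2 + w^2 = 1/2}"

definition rot_xw :: "real \<Rightarrow> R4 \<Rightarrow> R4" where
  "rot_xw \<psi> = (\<lambda>(x,y,z,w). (cos \<psi> * x - sin \<psi> * w, y, z, sin \<psi> * x + cos \<psi> * w))"

definition Qpsi :: "real \<Rightarrow> R3 set" where
  "Qpsi \<psi> = stereo ` (rot_xw \<psi> ` clifford - {(0,0,0,1)})"

definition rot_x90 :: "R3 \<Rightarrow> R3" where
  "rot_x90 = (\<lambda>(x,y,z). (x, - z, y))"

definition is_line :: "R3 set \<Rightarrow> bool" where
  "is_line l \<longleftrightarrow> (\<exists>p d. d \<noteq> 0 \<and> l = {p + t *\<^sub>R d | t. True})"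

end

theory Submission
  imports Defs
begin

text \<open>\<open>Q(\<psi>)\<close> is the stereographic image of the rotated Clifford torus, which on \<open>S\<^sup>3\<close> is the level
  set \<open>(b\<^sub>1\<cdot>v)\<^sup>2 + (b\<^sub>2\<cdot>v)\<^sup>2 = 1/2\<close>, and also \<open>(b\<^sub>3\<cdot>v)\<^sup>2 + (b\<^sub>4\<cdot>v)\<^sup>2 = 1/2\<close>, where
  \<open>b\<^sub>i = R\<^sup>x\<^sup>w\<^sub>\<psi> e\<^sub>i\<close>. Inversion in the sphere with centre \<open>a\<close> and radius \<open>sqrt (|a|\<^sup>2 + 1)\<close> is
  conjugate, via stereographic projection, to the reflection of \<open>S\<^sup>3\<close> with normal \<open>(-a, 1)\<close>, which
  fixes every linear form orthogonal to \<open>(-a, 1)\<close>. The centres \<open>a\<close> with \<open>b\<^sub>1, b\<^sub>2 \<perp> (-a, 1)\<close>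
  form the vertical line through \<open>(tan \<psi>, 0, 0)\<close>, those with \<open>b\<^sub>3, b\<^sub>4 \<perp> (-a, 1)\<close> the horizontal
  line through \<open>(-cot \<psi>, 0, 0)\<close>. On either line, with \<open>m\<^sub>0\<close> the foot of the perpendicular from
  the origin, Pythagoras gives \<open>|a|\<^sup>2 + 1 = |a - m\<^sub>0|\<^sup>2 + (|m\<^sub>0|\<^sup>2 + 1)\<close>, the required radius.
  Replacing \<open>\<psi>\<close> by \<open>\<psi> + \<pi>/2\<close> turns the second description of the torus into the first
  one with \<open>y\<close> and \<open>z\<close> exchanged, i.e. rotates \<open>Q\<close> about the \<open>x\<close>-axis.\<close>

definition sphere_form :: "real \<Rightarrow> R3 \<Rightarrow> real \<Rightarrow> R3 \<Rightarrow> real" where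
  "sphere_form h u g p = h * (norm p)\<^sup>2 + 2 * (u \<bullet> p) + g"

text \<open>The hypothesis on \<open>a\<close> says that the sphere \<open>sphere_form h u g = 0\<close> is orthogonal to the
  sphere of inversion (for \<open>h = 0\<close>: that the plane passes through \<open>a\<close>).\<close>
lemma sphere_form_sphere_inv:
  assumes "p \<noteq> a" and "sphere_form h u g a = h * \<rho>\<^sup>2"
  shows "sphere_form h u g (sphere_inv a \<rho> p) = \<rho>\<^sup>2 / (norm (p - a))\<^sup>2 * sphere_form h u g p"
proof -
  define d where "d = p - a"
  define k where "k = \<rho>\<^sup>2 / (norm d)\<^sup>2"
  have kd: "k * (norm d)\<^sup>2 = \<rho>\<^sup>2"
    using assms(1) by (simp add: k_def d_def)
  have "sphere_form h u g (sphere_inv a \<rho> p) = sphere_form h u g (k *\<^sub>R d + a)"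
    by (simp add: sphere_inv_def k_def d_def)
  also have "\<dots> = h * (k\<^sup>2 * (norm d)\<^sup>2 + 2 * k * (d \<bullet> a) + (norm a)\<^sup>2) + 2 * k * (u \<bullet> d) + 2 * (u \<bullet> a) + g"
    unfolding sphere_form_def power2_norm_eq_inner
    by (simp add: inner_add_left inner_add_right inner_commute algebra_simps power2_eq_square)
  also have "\<dots> = k * (h * (norm d)\<^sup>2 + 2 * h * (d \<bullet> a) + 2 * (u \<bullet> d) + h * \<rho>\<^sup>2)"
    using assms(2) kd unfolding sphere_form_def by (simp add: power2_eq_square algebra_simps)
  also have "h * (norm d)\<^sup>2 + 2 * h * (d \<bullet> a) + 2 * (u \<bullet> d) + h * \<rho>\<^sup>2 = sphere_form h u g p"
    using assms(2) unfolding sphere_form_def d_def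
    by (simp add: power2_norm_eq_inner inner_diff_left inner_diff_right inner_commute algebra_simps)
  finally show ?thesis by (simp add: k_def d_def)
qed

lemma sphere_inv_neq_center:
  assumes "\<rho> \<noteq> 0" and "p \<noteq> a"
  shows "sphere_inv a \<rho> p \<noteq> a"
  using assms by (simp add: sphere_inv_def)

lemma sphere_inv_sphere_inv:
  assumes "\<rho> \<noteq> 0" and "p \<noteq> a"
  shows "sphere_inv a \<rho> (sphere_inv a \<rho> p) = p"
proof -
  define d where "d = p - a"
  define k where "k = \<rho>\<^sup>2 / (norm d)\<^sup>2"
  have k: "k > 0" and kd: "k * (norm d)\<^sup>2 = \<rho>\<^sup>2"
    using assms by (simp_all add: k_def d_def)
  have q: "sphere_inv a \<rho> p - a = k *\<^sub>R d" by (simp add: sphere_inv_def k_def d_def)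
  have "(norm (k *\<^sub>R d))\<^sup>2 = k * \<rho>\<^sup>2"
    using k kd by (simp add: power_mult_distrib power2_eq_square mult.left_commute)
  moreover have "\<rho>\<^sup>2 \<noteq> 0" using assms(1) by simp
  ultimately have "\<rho>\<^sup>2 / (norm (k *\<^sub>R d))\<^sup>2 * k = 1"
    using k by simp
  then have "(\<rho>\<^sup>2 / (norm (k *\<^sub>R d))\<^sup>2) *\<^sub>R (k *\<^sub>R d) = d"
    by (metis scaleR_scaleR scaleR_one)
  then show ?thesis
    unfolding sphere_inv_def[of a \<rho> "sphere_inv a \<rho> p"] q by (simp add: d_def)
qed

lemma sphere_inv_image_eq:
  assumes "\<rho> \<noteq> 0" and "\<And>p. p \<in> Q \<Longrightarrow> p \<noteq> a \<Longrightarrow> sphere_inv a \<rho> p \<in> Q"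
  shows "sphere_inv a \<rho> ` (Q - {a}) = Q - {a}"
proof -
  have maps_to: "sphere_inv a \<rho> p \<in> Q - {a}" if "p \<in> Q - {a}" for p
  proof -
    from that have "p \<in> Q" "p \<noteq> a" by auto
    then show ?thesis using assms(2) sphere_inv_neq_center[OF assms(1)] by blast
  qed
  show ?thesis
  proof
    show "sphere_inv a \<rho> ` (Q - {a}) \<subseteq> Q - {a}"
      using maps_to by (rule image_subsetI)
    show "Q - {a} \<subseteq> sphere_inv a \<rho> ` (Q - {a})"
    proof
      fix p assume p: "p \<in> Q - {a}"
      show "p \<in> sphere_inv a \<rho> ` (Q - {a})"
      proof (rule image_eqI)
        show "p = sphere_inv a \<rho> (sphere_inv a \<rho> p)"
          using p sphere_inv_sphere_inv[OF assms(1)] by simp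
      qed (rule maps_to[OF p])
    qed
  qed
qed

lemma norm_R3_squared: "(norm ((x, y, z) :: R3))\<^sup>2 = x\<^sup>2 + y\<^sup>2 + z\<^sup>2"
  by (simp add: norm_Pair)

lemma norm_R4: "norm ((x, y, z, w) :: R4) = sqrt (x\<^sup>2 + y\<^sup>2 + z\<^sup>2 + w\<^sup>2)"
  by (simp add: norm_Pair add.assoc)

lemma in_unit_sphere_R4_iff: "((x, y, z, w) :: R4) \<in> sphere 0 1 \<longleftrightarrow> x\<^sup>2 + y\<^sup>2 + z\<^sup>2 + w\<^sup>2 = 1"
  by (simp add: norm_R4 del: mem_sphere_0)

definition inv_stereo :: "R3 \<Rightarrow> R4" where
  "inv_stereo = (\<lambda>(x, y, z). let D = x\<^sup>2 + y\<^sup>2 + z\<^sup>2 + 1 in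
     (2 * x / D, 2 * y / D, 2 * z / D, (x\<^sup>2 + y\<^sup>2 + z\<^sup>2 - 1) / D))"

lemma inv_stereo_eq:
  assumes "S = x\<^sup>2 + y\<^sup>2 + z\<^sup>2"
  shows "inv_stereo (x, y, z) = (2 * x / (S + 1), 2 * y / (S + 1), 2 * z / (S + 1), (S - 1) / (S + 1))"
  by (simp add: assms inv_stereo_def Let_def)

lemma inner_inv_stereo:
  "((norm p)\<^sup>2 + 1) * ((\<alpha>1, \<alpha>2, \<alpha>3, \<alpha>4) \<bullet> inv_stereo p)
     = sphere_form \<alpha>4 (\<alpha>1, \<alpha>2, \<alpha>3) (- \<alpha>4) p"
proof -
  obtain x y z where p: "p = (x, y, z)" by (cases p) auto
  define S where "S = x\<^sup>2 + y\<^sup>2 + z\<^sup>2"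
  have "S + 1 > 0" by (simp add: S_def add_nonneg_pos)
  moreover have "(\<alpha>1, \<alpha>2, \<alpha>3, \<alpha>4) \<bullet> inv_stereo p
      = (2 * (\<alpha>1 * x + \<alpha>2 * y + \<alpha>3 * z) + \<alpha>4 * (S - 1)) / (S + 1)"
    by (simp add: p inv_stereo_eq[OF S_def] add_divide_distrib mult.left_commute)
  moreover have "sphere_form \<alpha>4 (\<alpha>1, \<alpha>2, \<alpha>3) (- \<alpha>4) p
      = 2 * (\<alpha>1 * x + \<alpha>2 * y + \<alpha>3 * z) + \<alpha>4 * (S - 1)"
    by (simp add: p sphere_form_def norm_R3_squared S_def algebra_simps)
  moreover have "(norm p)\<^sup>2 = S" by (simp add: p norm_R3_squared S_def)
  ultimately show ?thesis by simp
qed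

lemma stereo_inv_stereo: "stereo (inv_stereo p) = p"
proof -
  obtain x y z where p: "p = (x, y, z)" by (cases p) auto
  define S where "S = x\<^sup>2 + y\<^sup>2 + z\<^sup>2"
  have D: "S + 1 > 0" by (simp add: S_def add_nonneg_pos)
  then have "1 - (S - 1) / (S + 1) = 2 / (S + 1)" by (simp add: field_simps)
  then have "stereo (inv_stereo p) = (2 * x / (S + 1) / (2 / (S + 1)),
      2 * y / (S + 1) / (2 / (S + 1)), 2 * z / (S + 1) / (2 / (S + 1)))"
    by (simp only: p inv_stereo_eq[OF S_def] stereo_def prod.case)
  then show ?thesis
    using D by (simp add: p)
qed

lemma inv_stereo_in_sphere: "inv_stereo p \<in> sphere 0 1 - {(0, 0, 0, 1)}"
proof -
  obtain x y z where p: "p = (x, y, z)" by (cases p) auto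
  define S where "S = x\<^sup>2 + y\<^sup>2 + z\<^sup>2"
  have D: "S + 1 > 0" by (simp add: S_def add_nonneg_pos)
  have "(2 * x / (S + 1))\<^sup>2 + (2 * y / (S + 1))\<^sup>2 + (2 * z / (S + 1))\<^sup>2 + ((S - 1) / (S + 1))\<^sup>2
      = (4 * S + (S - 1)\<^sup>2) / (S + 1)\<^sup>2"
    by (simp add: S_def power_divide add_divide_distrib power_mult_distrib)
  also have "4 * S + (S - 1)\<^sup>2 = (S + 1)\<^sup>2"
    by (simp add: power2_eq_square algebra_simps)
  finally have "(2 * x / (S + 1))\<^sup>2 + (2 * y / (S + 1))\<^sup>2 + (2 * z / (S + 1))\<^sup>2 + ((S - 1) / (S + 1))\<^sup>2 = 1"
    using D by simp
  moreover have "(S - 1) / (S + 1) \<noteq> 1" using D by (simp add: field_simps)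
  ultimately show ?thesis
    by (simp add: p inv_stereo_eq[OF S_def] norm_R4)
qed

lemma inv_stereo_stereo:
  assumes "v \<in> sphere 0 1" and "v \<noteq> (0, 0, 0, 1)"
  shows "inv_stereo (stereo v) = v"
proof -
  obtain x y z w where v: "v = (x, y, z, w)" by (cases v) auto
  have n: "x\<^sup>2 + y\<^sup>2 + z\<^sup>2 + w\<^sup>2 = 1" using assms(1) unfolding v in_unit_sphere_R4_iff .
  have "w \<noteq> 1"
  proof
    assume "w = 1"
    then have "x\<^sup>2 + y\<^sup>2 + z\<^sup>2 = 0" using n by simp
    then have "x = 0 \<and> y = 0 \<and> z = 0" by (simp add: add_nonneg_eq_0_iff)
    with \<open>w = 1\<close> assms(2) show False by (simp add: v)
  qed
  then have w: "1 - w \<noteq> 0" by simp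
  define S where "S = (x / (1 - w))\<^sup>2 + (y / (1 - w))\<^sup>2 + (z / (1 - w))\<^sup>2"
  have "S = (1 - w) * (1 + w) / (1 - w)\<^sup>2"
    using n by (simp add: S_def power_divide add_divide_distrib[symmetric] algebra_simps power2_eq_square)
  then have S: "S = (1 + w) / (1 - w)"
    using w by (simp add: power2_eq_square)
  have "(1 - w) * (S + 1) = 2"
    using w by (simp add: S field_simps)
  moreover have "(S - 1) / (S + 1) = w"
    using w by (simp add: S field_simps)
  ultimately show ?thesis
    by (simp add: v stereo_def inv_stereo_eq[OF S_def])
qed

lemma stereo_image_eq:
  assumes "A \<subseteq> sphere 0 1"
  shows "stereo ` (A - {(0, 0, 0, 1)}) = inv_stereo -` A"
proof
  show "stereo ` (A - {(0, 0, 0, 1)}) \<subseteq> inv_stereo -` A"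
  proof
    fix p assume "p \<in> stereo ` (A - {(0, 0, 0, 1)})"
    then obtain v where v: "v \<in> A" "v \<noteq> (0, 0, 0, 1)" and p: "p = stereo v" by blast
    then have "inv_stereo p = v" using assms inv_stereo_stereo by blast
    then show "p \<in> inv_stereo -` A" using v by simp
  qed
  show "inv_stereo -` A \<subseteq> stereo ` (A - {(0, 0, 0, 1)})"
  proof
    fix p assume "p \<in> inv_stereo -` A"
    then have "inv_stereo p \<in> A - {(0, 0, 0, 1)}" using inv_stereo_in_sphere by auto
    then show "p \<in> stereo ` (A - {(0, 0, 0, 1)})" using stereo_inv_stereo by (metis image_eqI)
  qed
qed

lemma rot_xw_rot_xw: "rot_xw \<phi> (rot_xw \<psi> v) = rot_xw (\<phi> + \<psi>) v"
  by (cases v) (simp add: rot_xw_def cos_add sin_add algebra_simps)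

lemma rot_xw_zero: "rot_xw 0 v = v"
  by (cases v) (simp add: rot_xw_def)

lemma image_rot_xw: "rot_xw \<psi> ` A = rot_xw (- \<psi>) -` A"
proof
  show "rot_xw \<psi> ` A \<subseteq> rot_xw (- \<psi>) -` A"
    by (auto simp: rot_xw_rot_xw rot_xw_zero)
  show "rot_xw (- \<psi>) -` A \<subseteq> rot_xw \<psi> ` A"
  proof
    fix v assume "v \<in> rot_xw (- \<psi>) -` A"
    moreover have "v = rot_xw \<psi> (rot_xw (- \<psi>) v)" by (simp add: rot_xw_rot_xw rot_xw_zero)
    ultimately show "v \<in> rot_xw \<psi> ` A" by blast
  qed
qed

lemma norm_rot_xw: "norm (rot_xw \<psi> v) = norm v"
proof -
  obtain x y z w where v: "v = (x, y, z, w)" by (cases v) auto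
  have "(cos \<psi> * x - sin \<psi> * w)\<^sup>2 + y\<^sup>2 + z\<^sup>2 + (sin \<psi> * x + cos \<psi> * w)\<^sup>2
      = ((sin \<psi>)\<^sup>2 + (cos \<psi>)\<^sup>2) * (x\<^sup>2 + w\<^sup>2) + y\<^sup>2 + z\<^sup>2"
    by algebra
  also have "\<dots> = x\<^sup>2 + y\<^sup>2 + z\<^sup>2 + w\<^sup>2" by simp
  finally show ?thesis by (simp add: v rot_xw_def norm_R4)
qed

lemma rot_xw_neg_components:
  "rot_xw (- \<psi>) v = ((cos \<psi>, 0, 0, sin \<psi>) \<bullet> v, (0, 1, 0, 0) \<bullet> v, (0, 0, 1, 0) \<bullet> v,
     (- sin \<psi>, 0, 0, cos \<psi>) \<bullet> v)"
  by (cases v) (simp add: rot_xw_def)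

lemma clifford_subset_sphere: "clifford \<subseteq> sphere 0 1"
proof
  fix v assume "v \<in> clifford"
  then obtain x y z w where v: "v = (x, y, z, w)" and "x\<^sup>2 + y\<^sup>2 = 1/2" "z\<^sup>2 + w\<^sup>2 = 1/2"
    by (auto simp: clifford_def)
  then show "v \<in> sphere 0 1" unfolding v in_unit_sphere_R4_iff by simp
qed

lemma clifford_iff:
  assumes "(x, y, z, w) \<in> sphere 0 1"
  shows "(x, y, z, w) \<in> clifford \<longleftrightarrow> x\<^sup>2 + y\<^sup>2 = 1/2"
    and "(x, y, z, w) \<in> clifford \<longleftrightarrow> z\<^sup>2 + w\<^sup>2 = 1/2"
  using assms unfolding in_unit_sphere_R4_iff by (auto simp: clifford_def)

lemma Qpsi_eq: "Qpsi \<psi> = {p. rot_xw (- \<psi>) (inv_stereo p) \<in> clifford}"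
proof -
  have "rot_xw \<psi> ` clifford \<subseteq> sphere 0 1"
    using clifford_subset_sphere by (auto simp: norm_rot_xw)
  then show ?thesis
    unfolding Qpsi_def by (auto simp: stereo_image_eq image_rot_xw)
qed

lemma rot_xw_inv_stereo_in_sphere: "rot_xw \<psi> (inv_stereo p) \<in> sphere 0 1"
  using inv_stereo_in_sphere[of p] by (simp add: norm_rot_xw)

lemma Qpsi_eq_level_set_xy:
  "Qpsi \<psi> = {p. ((cos \<psi>, 0, 0, sin \<psi>) \<bullet> inv_stereo p)\<^sup>2 + ((0, 1, 0, 0) \<bullet> inv_stereo p)\<^sup>2 = 1/2}"
  unfolding Qpsi_eq using clifford_iff(1) rot_xw_inv_stereo_in_sphere[of "- \<psi>"]
  by (simp add: rot_xw_neg_components[of \<psi>])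

lemma Qpsi_eq_level_set_zw:
  "Qpsi \<psi> = {p. ((0, 0, 1, 0) \<bullet> inv_stereo p)\<^sup>2 + ((- sin \<psi>, 0, 0, cos \<psi>) \<bullet> inv_stereo p)\<^sup>2 = 1/2}"
  unfolding Qpsi_eq using clifford_iff(2) rot_xw_inv_stereo_in_sphere[of "- \<psi>"]
  by (simp add: rot_xw_neg_components[of \<psi>])

text \<open>The great sphere of \<open>S\<^sup>3\<close> orthogonal to \<open>great_sphere_normal a\<close> is mapped by \<open>stereo\<close>
  onto the sphere with centre \<open>a\<close> and radius \<open>sqrt (|a|\<^sup>2 + 1)\<close>.\<close>
definition great_sphere_normal :: "R3 \<Rightarrow> R4" where
  "great_sphere_normal = (\<lambda>(a1, a2, a3). (- a1, - a2, - a3, 1))"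

lemma inner_inv_stereo_sphere_inv:
  assumes "\<alpha> \<bullet> great_sphere_normal a = 0" and "\<rho>\<^sup>2 = (norm a)\<^sup>2 + 1" and "p \<noteq> a"
  shows "\<alpha> \<bullet> inv_stereo (sphere_inv a \<rho> p) = \<alpha> \<bullet> inv_stereo p"
proof -
  obtain \<alpha>1 \<alpha>2 \<alpha>3 \<alpha>4 where \<alpha>: "\<alpha> = (\<alpha>1, \<alpha>2, \<alpha>3, \<alpha>4)" by (cases \<alpha>) auto
  define L where "L = sphere_form \<alpha>4 (\<alpha>1, \<alpha>2, \<alpha>3) (- \<alpha>4)"
  define q where "q = sphere_inv a \<rho> p"
  define k where "k = \<rho>\<^sup>2 / (norm (p - a))\<^sup>2"
  have "(\<alpha>1, \<alpha>2, \<alpha>3) \<bullet> a = \<alpha>4"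
    using assms(1) by (cases a) (simp add: \<alpha> great_sphere_normal_def)
  then have "L a = \<alpha>4 * \<rho>\<^sup>2"
    using assms(2) by (simp add: L_def sphere_form_def algebra_simps)
  then have L_q: "L q = k * L p"
    unfolding L_def q_def k_def by (rule sphere_form_sphere_inv[OF assms(3)])
  have "sphere_form 1 0 1 a = 1 * \<rho>\<^sup>2"
    using assms(2) by (simp add: sphere_form_def)
  then have N_q: "(norm q)\<^sup>2 + 1 = k * ((norm p)\<^sup>2 + 1)"
    using sphere_form_sphere_inv[OF assms(3), of 1 0 1] by (simp add: sphere_form_def q_def k_def)
  have "((norm q)\<^sup>2 + 1) * (\<alpha> \<bullet> inv_stereo q) = L q"
    by (simp add: \<alpha> L_def inner_inv_stereo)
  also have "\<dots> = k * (((norm p)\<^sup>2 + 1) * (\<alpha> \<bullet> inv_stereo p))"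
    unfolding L_q by (simp add: \<alpha> L_def inner_inv_stereo)
  also have "\<dots> = ((norm q)\<^sup>2 + 1) * (\<alpha> \<bullet> inv_stereo p)"
    by (simp add: N_q)
  finally have "((norm q)\<^sup>2 + 1) * (\<alpha> \<bullet> inv_stereo q) = ((norm q)\<^sup>2 + 1) * (\<alpha> \<bullet> inv_stereo p)" .
  moreover have "(norm q)\<^sup>2 + 1 \<noteq> 0"
    using zero_le_power2[of "norm q"] by linarith
  ultimately show ?thesis
    unfolding q_def by simp
qed

lemma gen_refl_sym_level_set:
  assumes "m0 \<in> l" and "\<And>a. a \<in> l \<Longrightarrow> orthogonal (a - m0) m0"
    and "\<And>a. a \<in> l \<Longrightarrow> \<alpha> \<bullet> great_sphere_normal a = 0"
    and "\<And>a. a \<in> l \<Longrightarrow> \<beta> \<bullet> great_sphere_normal a = 0"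
  shows "gen_refl_sym {p. (\<alpha> \<bullet> inv_stereo p)\<^sup>2 + (\<beta> \<bullet> inv_stereo p)\<^sup>2 = r} l"
proof -
  define Q where "Q = {p. (\<alpha> \<bullet> inv_stereo p)\<^sup>2 + (\<beta> \<bullet> inv_stereo p)\<^sup>2 = r}"
  define \<rho>0 where "\<rho>0 = sqrt ((norm m0)\<^sup>2 + 1)"
  have "sphere_inv a (sqrt ((norm (a - m0))\<^sup>2 + \<rho>0\<^sup>2)) ` (Q - {a}) = Q - {a}" if "a \<in> l" for a
  proof -
    define \<rho> where "\<rho> = sqrt ((norm a)\<^sup>2 + 1)"
    have "(norm a)\<^sup>2 + 1 > 0" by (rule add_nonneg_pos) simp_all
    then have \<rho>: "\<rho>\<^sup>2 = (norm a)\<^sup>2 + 1" "\<rho> \<noteq> 0"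
      by (simp_all add: \<rho>_def)
    have "(norm (a - m0))\<^sup>2 + \<rho>0\<^sup>2 = (norm (a - m0 + m0))\<^sup>2 + 1"
      using norm_add_Pythagorean[OF assms(2)[OF that]] by (simp add: \<rho>0_def add_nonneg_pos)
    then have "sqrt ((norm (a - m0))\<^sup>2 + \<rho>0\<^sup>2) = \<rho>" by (simp add: \<rho>_def)
    moreover have "sphere_inv a \<rho> p \<in> Q" if "p \<in> Q" "p \<noteq> a" for p
      using that inner_inv_stereo_sphere_inv[OF assms(3)[OF \<open>a \<in> l\<close>] \<rho>(1)]
        inner_inv_stereo_sphere_inv[OF assms(4)[OF \<open>a \<in> l\<close>] \<rho>(1)]
      by (simp add: Q_def)
    ultimately show ?thesis
      using sphere_inv_image_eq[OF \<rho>(2)] by simp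
  qed
  moreover have "\<rho>0 > 0" by (simp add: \<rho>0_def add_nonneg_pos)
  ultimately show ?thesis
    unfolding gen_refl_sym_def Q_def[symmetric] using assms(1) by blast
qed

lemma gen_refl_sym_Qpsi_vertical:
  assumes "cos \<psi> \<noteq> 0"
  shows "gen_refl_sym (Qpsi \<psi>) {(tan \<psi>, 0, t) | t. True}"
  unfolding Qpsi_eq_level_set_xy
proof (rule gen_refl_sym_level_set)
  show "(tan \<psi>, 0, 0) \<in> {(tan \<psi>, 0, t) | t. True}" by blast
  fix a :: R3 assume "a \<in> {(tan \<psi>, 0, t) | t. True}"
  then obtain t where a: "a = (tan \<psi>, 0, t)" by blast
  show "orthogonal (a - (tan \<psi>, 0, 0)) (tan \<psi>, 0, 0)"
    by (simp add: a orthogonal_def)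
  show "(cos \<psi>, 0, 0, sin \<psi>) \<bullet> great_sphere_normal a = 0"
    using assms by (simp add: a great_sphere_normal_def tan_def)
  show "(0, 1, 0, 0) \<bullet> great_sphere_normal a = 0"
    by (simp add: a great_sphere_normal_def)
qed

lemma gen_refl_sym_Qpsi_horizontal:
  assumes "sin \<psi> \<noteq> 0"
  shows "gen_refl_sym (Qpsi \<psi>) {(- cot \<psi>, t, 0) | t. True}"
  unfolding Qpsi_eq_level_set_zw
proof (rule gen_refl_sym_level_set)
  show "(- cot \<psi>, 0, 0) \<in> {(- cot \<psi>, t, 0) | t. True}" by blast
  fix a :: R3 assume "a \<in> {(- cot \<psi>, t, 0) | t. True}"
  then obtain t where a: "a = (- cot \<psi>, t, 0)" by blast
  show "orthogonal (a - (- cot \<psi>, 0, 0)) (- cot \<psi>, 0, 0)"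
    by (simp add: a orthogonal_def)
  show "(0, 0, 1, 0) \<bullet> great_sphere_normal a = 0"
    by (simp add: a great_sphere_normal_def)
  show "(- sin \<psi>, 0, 0, cos \<psi>) \<bullet> great_sphere_normal a = 0"
    using assms by (simp add: a great_sphere_normal_def cot_def)
qed

lemma inner_inv_stereo_rot_x90:
  "(\<alpha>1, \<alpha>2, \<alpha>3, \<alpha>4) \<bullet> inv_stereo (rot_x90 p) = (\<alpha>1, \<alpha>3, - \<alpha>2, \<alpha>4) \<bullet> inv_stereo p"
  by (cases p) (simp add: rot_x90_def inv_stereo_def Let_def add_ac)

lemma Qpsi_add_pi_half: "Qpsi (\<psi> + pi/2) = rot_x90 ` Qpsi \<psi>"
proof -
  have "rot_x90 p \<in> Qpsi (\<psi> + pi/2) \<longleftrightarrow> p \<in> Qpsi \<psi>" for p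
  proof -
    obtain X Y Z W where "inv_stereo p = (X, Y, Z, W)" by (cases "inv_stereo p") auto
    then show ?thesis
      unfolding Qpsi_eq_level_set_zw[of \<psi>] Qpsi_eq_level_set_xy[of "\<psi> + pi/2"]
      by (simp add: cos_add sin_add inner_inv_stereo_rot_x90 add.commute)
  qed
  then have "Qpsi \<psi> = rot_x90 -` Qpsi (\<psi> + pi/2)" by blast
  moreover have "surj rot_x90"
    by (rule surjI[of _ "\<lambda>(x, y, z). (x, z, - y)"]) (auto simp: rot_x90_def)
  ultimately show ?thesis by (simp add: surj_image_vimage_eq)
qed

lemma Qpsi_add_pi: "Qpsi (\<psi> + pi) = Qpsi \<psi>"
proof -
  have "p \<in> Qpsi (\<psi> + pi) \<longleftrightarrow> p \<in> Qpsi \<psi>" for p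
  proof -
    obtain X Y Z W where "inv_stereo p = (X, Y, Z, W)" by (cases "inv_stereo p") auto
    then show ?thesis
      unfolding Qpsi_eq_level_set_xy by (simp add: power2_eq_square algebra_simps)
  qed
  then show ?thesis by auto
qed

lemma is_line_parallel_z: "is_line {(a, b, t) | t. True}"
  unfolding is_line_def
  by (rule exI[of _ "(a, b, 0)"], rule exI[of _ "(0, 0, 1)"]) (auto simp: zero_prod_def)

lemma is_line_parallel_y: "is_line {(a, t, b) | t. True}"
  unfolding is_line_def
  by (rule exI[of _ "(a, 0, b)"], rule exI[of _ "(0, 1, 0)"]) (auto simp: zero_prod_def)

lemma Qpsi_gen_refl_sym_some_line: "\<exists>l. is_line l \<and> gen_refl_sym (Qpsi \<psi>) l"
proof (cases "sin \<psi> = 0")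
  case True
  then have "cos \<psi> \<noteq> 0" using sin_zero_abs_cos_one by fastforce
  then show ?thesis using gen_refl_sym_Qpsi_vertical is_line_parallel_z by blast
next
  case False
  then show ?thesis using gen_refl_sym_Qpsi_horizontal is_line_parallel_y by blast
qed

theorem proposition1:
  shows "gen_refl_sym (Qpsi 0) {(0, 0, t) | t. True}
    \<and> (\<forall>\<psi>. 0 < \<bar>\<psi>\<bar> \<and> \<bar>\<psi>\<bar> < pi/2 \<longrightarrow> gen_refl_sym (Qpsi \<psi>) {(tan \<psi>, 0, t) | t. True})
    \<and> (\<forall>\<psi>. 0 < \<bar>\<psi>\<bar> \<and> \<bar>\<psi>\<bar> \<le> pi/2 \<longrightarrow> gen_refl_sym (Qpsi \<psi>) {(- cot \<psi>, t, 0) | t. True})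
    \<and> (\<forall>\<psi>. Qpsi (\<psi> + pi/2) = rot_x90 ` Qpsi \<psi>)
    \<and> (\<forall>\<psi>. Qpsi (\<psi> + pi) = Qpsi \<psi>)
    \<and> (\<forall>\<psi>. \<exists>l. is_line l \<and> gen_refl_sym (Qpsi \<psi>) l)"
proof (intro conjI allI impI Qpsi_add_pi_half Qpsi_add_pi Qpsi_gen_refl_sym_some_line)
  show "gen_refl_sym (Qpsi 0) {(0, 0, t) | t. True}"
    using gen_refl_sym_Qpsi_vertical[of 0] by simp
next
  fix \<psi> :: real assume "0 < \<bar>\<psi>\<bar> \<and> \<bar>\<psi>\<bar> < pi/2"
  then have "cos \<psi> > 0" by (intro cos_gt_zero_pi) auto
  then show "gen_refl_sym (Qpsi \<psi>) {(tan \<psi>, 0, t) | t. True}"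
    by (intro gen_refl_sym_Qpsi_vertical) simp
next
  fix \<psi> :: real assume "0 < \<bar>\<psi>\<bar> \<and> \<bar>\<psi>\<bar> \<le> pi/2"
  then have "sin \<psi> \<noteq> 0" using sin_zero_pi_iff[of \<psi>] pi_gt_zero by auto
  then show "gen_refl_sym (Qpsi \<psi>) {(- cot \<psi>, t, 0) | t. True}"
    by (rule gen_refl_sym_Qpsi_horizontal)
qed

end
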